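(* Let $x^0=0,x^1,x^2,\dots$ be the (random) states chosen by DRBG($N$) in the discrete setting described in the context, let $SC^t=\sum_{i=1}^t\|x^i-x^{i-1}\|$, and let $\phi^t=\frac{1}{2\theta}\big(w^t(x_1)+w^t(x_m)\big)-\frac{\|x_m-x_1\|}{2}$. Then for every time step $t$, $\mathbb{E}[SC^t]\le\phi^t$.
   Context: Discrete setting: a finite set of states $M=\{x_1,\dots,x_m\}\subset\mathbb{R}^+$ with $x_1=0$ and equal spacing $x_{k+1}-x_k=\delta$; a norm $\|\cdot\|$ on $\mathbb{R}$; $\theta\ge1$ and $N(\cdot)=\theta\|\cdot\|$; cost functions $c^t:M\to\mathbb{R}^+$ that are restrictions to $M$ of convex functions. Work function: $w^0(x)=N(x)$ and $w^t(x)=\min_{y\in M}\{w^{t-1}(y)+c^t(y)+N(x-y)\}$ for $x\in M$. Algorithm DRBG($N$): draw a single random number $r$ uniformly from $(-1,1)$; at each time step $t$ go to the state $x^t\in M$ minimizing $Y^t(x)=w^{t-1}(x)+rN(x)$. The expectation is over $r$. *)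

theory Defs
  imports "HOL-Analysis.Analysis"
begin

definition is_norm :: "(real \<Rightarrow> real) \<Rightarrow> bool" where
  "is_norm nm \<longleftrightarrow> (\<forall>x. nm x \<ge> 0) \<and> (\<forall>x. nm x = 0 \<longleftrightarrow> x = 0)
     \<and> (\<forall>a x. nm (a * x) = \<bar>a\<bar> * nm x) \<and> (\<forall>x y. nm (x + y) \<le> nm x + nm y)"

text \<open>The equally spaced state set M = {x_1,...,x_m} with x_1 = 0, x_(k+1) - x_k = delta.\<close>
definition states :: "nat \<Rightarrow> real \<Rightarrow> real set" where
  "states m \<delta> = {real k * \<delta> | k. k < m}"

fun work :: "real set \<Rightarrow> (real \<Rightarrow> real) \<Rightarrow> (nat \<Rightarrow> real \<Rightarrow> real) \<Rightarrow> nat \<Rightarrow> real \<Rightarrow> real" where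
  "work M N c 0 x = N x"
| "work M N c (Suc t) x = Min ((\<lambda>y. work M N c t y + c (Suc t) y + N (x - y)) ` M)"

definition switching_cost :: "(real \<Rightarrow> real) \<Rightarrow> (nat \<Rightarrow> real \<Rightarrow> real) \<Rightarrow> nat \<Rightarrow> real \<Rightarrow> real" where
  "switching_cost nm xs t r = (\<Sum>i\<in>{1..t}. nm (xs i r - xs (i - 1) r))"

end

theory Submission
  imports Defs
begin

text \<open>On the grid \<open>i \<mapsto> i \<delta>\<close> the norm is a multiple of \<open>\<bar>\<cdot>\<bar>\<close>, so moving across an edge costs
  \<open>l = \<theta> \<parallel>\<delta>\<parallel>\<close> and the work function is an iterated infimal convolution of convex functions with
  \<open>l \<bar>\<cdot>\<bar>\<close>. It stays discretely convex, and its slopes \<open>a_t(k)\<close> evolve by adding the slopes of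
  \<open>c_(t+1)\<close> and clipping to \<open>[-l, l]\<close>. By convexity DRBG with parameter \<open>r\<close> ends step \<open>t + 1\<close>
  to the right of grid point \<open>k\<close> exactly when \<open>r < -a_t(k) / l\<close>, so a move crosses edge \<open>k\<close> only
  when \<open>r\<close> lies between two consecutive thresholds, and averaging over \<open>r\<close> bounds the expected
  movement by \<open>(1 / 2\<theta>) \<Sum>\<^sub>k \<bar>a_(t+1)(k) - a_t(k)\<bar>\<close>. The slopes of \<open>c_(t+1)\<close> increase in \<open>k\<close>, so the
  increments of \<open>w_(t+1) - w_t \<ge> 0\<close> change sign only once; hence this total variation is at most
  the growth of the work function at the two end points, and the sum over \<open>t\<close> telescopes.\<close>

section \<open>Discretely convex functions\<close>

definition discrete_convex :: "nat \<Rightarrow> (nat \<Rightarrow> real) \<Rightarrow> bool" where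
  "discrete_convex m H \<longleftrightarrow> (\<forall>k. k + 2 < m \<longrightarrow> H (Suc k) - H k \<le> H (Suc (Suc k)) - H (Suc k))"

lemma discrete_convex_cong:
  "(\<And>k. k < m \<Longrightarrow> G k = H k) \<Longrightarrow> discrete_convex m G \<longleftrightarrow> discrete_convex m H"
  unfolding discrete_convex_def by auto

lemma discrete_convex_add:
  "discrete_convex m G \<Longrightarrow> discrete_convex m H \<Longrightarrow> discrete_convex m (\<lambda>i. G i + H i)"
  unfolding discrete_convex_def by (smt (verit))

lemma discrete_convex_linear: "discrete_convex m (\<lambda>i. b * real i)"
  unfolding discrete_convex_def by (simp add: algebra_simps)

lemma convex_on_discrete_convex:
  assumes "convex_on UNIV f"
  shows "discrete_convex m (\<lambda>k. f (real k * \<delta>))"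
  unfolding discrete_convex_def
proof (intro allI impI)
  fix k
  have "f ((1 - 1/2) *\<^sub>R (real k * \<delta>) + (1/2) *\<^sub>R (real (Suc (Suc k)) * \<delta>))
      \<le> (1 - 1/2) * f (real k * \<delta>) + (1/2) * f (real (Suc (Suc k)) * \<delta>)"
    by (rule convex_onD[OF assms]) auto
  moreover have "(1 - 1/2) *\<^sub>R (real k * \<delta>) + (1/2) *\<^sub>R (real (Suc (Suc k)) * \<delta>) = real (Suc k) * \<delta>"
    by (simp add: algebra_simps)
  ultimately show "f (real (Suc k) * \<delta>) - f (real k * \<delta>)
      \<le> f (real (Suc (Suc k)) * \<delta>) - f (real (Suc k) * \<delta>)"
    by simp
qed

lemma discrete_convex_slope_mono:
  assumes "discrete_convex m H" "k \<le> l" "Suc l < m"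
  shows "H (Suc k) - H k \<le> H (Suc l) - H l"
  using assms(2,3)
proof (induction l rule: dec_induct)
  case base
  then show ?case by simp
next
  case (step l)
  then have "H (Suc k) - H k \<le> H (Suc l) - H l" by simp
  also have "\<dots> \<le> H (Suc (Suc l)) - H (Suc l)"
    using assms(1) step by (auto simp: discrete_convex_def)
  finally show ?case .
qed

lemma discrete_convex_diff_ge:
  assumes "discrete_convex m H" "i < j" "j < m"
  shows "(real j - real i) * (H (Suc i) - H i) \<le> H j - H i"
proof -
  have "(\<Sum>k=i..<j. H (Suc i) - H i) \<le> (\<Sum>k=i..<j. H (Suc k) - H k)"
    by (rule sum_mono) (use discrete_convex_slope_mono[OF assms(1)] assms in auto)
  also have "\<dots> = H j - H i"
    using assms by (simp add: sum_Suc_diff')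
  finally show ?thesis
    using assms by simp
qed

lemma discrete_convex_diff_le:
  assumes "discrete_convex m H" "i \<le> j" "Suc j < m"
  shows "H (Suc j) - H i \<le> (real (Suc j) - real i) * (H (Suc j) - H j)"
proof -
  have "H (Suc j) - H i = (\<Sum>k=i..<Suc j. H (Suc k) - H k)"
    using assms by (simp add: sum_Suc_diff')
  also have "\<dots> \<le> (\<Sum>k=i..<Suc j. H (Suc j) - H j)"
    by (rule sum_mono) (use discrete_convex_slope_mono[OF assms(1)] assms in auto)
  finally show ?thesis
    using assms by simp
qed

lemma discrete_convex_argmin_gt:
  assumes "discrete_convex m G" "\<forall>j<m. G i \<le> G j" "Suc k < m" "G (Suc k) < G k"
  shows "k < i"
proof (rule ccontr)
  assume "\<not> k < i"
  then have "G (Suc k) - G i \<le> (real (Suc k) - real i) * (G (Suc k) - G k)"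
    by (intro discrete_convex_diff_le[OF assms(1) _ assms(3)]) simp
  moreover have "(real (Suc k) - real i) * (G (Suc k) - G k) < 0"
    using \<open>\<not> k < i\<close> assms(4) by (simp add: mult_pos_neg)
  ultimately show False
    using assms(2,3) by force
qed

lemma discrete_convex_argmin_le:
  assumes "discrete_convex m G" "i < m" "\<forall>j<m. G i \<le> G j" "Suc k < m" "G k < G (Suc k)"
  shows "i \<le> k"
proof (rule ccontr)
  assume "\<not> i \<le> k"
  then have "(real i - real k) * (G (Suc k) - G k) \<le> G i - G k"
    by (intro discrete_convex_diff_ge[OF assms(1) _ assms(2)]) simp
  moreover have "0 < (real i - real k) * (G (Suc k) - G k)"
    using \<open>\<not> i \<le> k\<close> assms(5) by simp
  moreover have "G i \<le> G k"
    using assms(3,4) by simp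
  ultimately show False
    by linarith
qed

lemma bounded_slopes_lipschitz:
  assumes "\<And>k. Suc k < m \<Longrightarrow> \<bar>H (Suc k) - H k\<bar> \<le> l" "i < m" "j < m"
  shows "\<bar>H j - H i\<bar> \<le> \<bar>real j - real i\<bar> * l"
proof -
  have ordered: "\<bar>H j - H i\<bar> \<le> (real j - real i) * l" if "i \<le> j" "j < m" for i j
  proof -
    have "\<bar>H j - H i\<bar> = \<bar>\<Sum>k=i..<j. H (Suc k) - H k\<bar>"
      using that by (simp add: sum_Suc_diff')
    also have "\<dots> \<le> (\<Sum>k=i..<j. l)"
      by (rule order_trans[OF sum_abs sum_mono]) (use assms(1) that in auto)
    finally show ?thesis
      using that by simp
  qed
  show ?thesis
    using ordered[of i j] ordered[of j i] assms(2,3)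
    by (cases "i \<le> j") (auto simp: abs_minus_commute)
qed

definition clip :: "real \<Rightarrow> real \<Rightarrow> real" where
  "clip l x = max (-l) (min l x)"

lemma clip_mono: "x \<le> y \<Longrightarrow> clip l x \<le> clip l y"
  unfolding clip_def by simp

lemma clip_diff_le: "0 \<le> l \<Longrightarrow> \<bar>clip l x - clip l y\<bar> \<le> \<bar>x - y\<bar>"
  unfolding clip_def by (simp add: max_def min_def)

lemma clip_add_ge: "\<bar>a\<bar> \<le> l \<Longrightarrow> 0 \<le> g \<Longrightarrow> a \<le> clip l (a + g)"
  unfolding clip_def by (simp add: abs_le_iff)

lemma clip_add_gt_imp_pos: "\<bar>a\<bar> \<le> l \<Longrightarrow> a < clip l (a + g) \<Longrightarrow> 0 < g"
  unfolding clip_def by (auto simp: abs_le_iff max_def min_def split: if_splits)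

section \<open>Infimal convolution with a multiple of the distance\<close>

definition inf_conv :: "nat \<Rightarrow> (nat \<Rightarrow> real) \<Rightarrow> real \<Rightarrow> nat \<Rightarrow> real" where
  "inf_conv m H l i = Min ((\<lambda>j. H j + l * \<bar>real i - real j\<bar>) ` {..<m})"

lemma inf_conv_le: "j < m \<Longrightarrow> inf_conv m H l i \<le> H j + l * \<bar>real i - real j\<bar>"
  unfolding inf_conv_def by (rule Min_le) auto

lemma inf_conv_attained:
  assumes "0 < m"
  obtains j where "j < m" "inf_conv m H l i = H j + l * \<bar>real i - real j\<bar>"
proof -
  have "inf_conv m H l i \<in> (\<lambda>j. H j + l * \<bar>real i - real j\<bar>) ` {..<m}"
    unfolding inf_conv_def using assms by (intro Min_in) auto
  then show ?thesis
    using that by blast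
qed

lemma inf_conv_lipschitz:
  assumes "0 < m" "0 \<le> l"
  shows "inf_conv m H l i \<le> inf_conv m H l j + l * \<bar>real i - real j\<bar>"
proof -
  obtain k where k: "k < m" "inf_conv m H l j = H k + l * \<bar>real j - real k\<bar>"
    using inf_conv_attained[OF assms(1)] by blast
  have "l * \<bar>real i - real k\<bar> \<le> l * (\<bar>real j - real k\<bar> + \<bar>real i - real j\<bar>)"
    using assms(2) by (intro mult_left_mono) auto
  then show ?thesis
    using inf_conv_le[OF k(1), of H l i] k(2) by (simp add: algebra_simps)
qed

lemma inf_conv_eq:
  assumes H: "discrete_convex m H" and "i < m" "0 \<le> l"
    and right: "Suc i < m \<Longrightarrow> -l \<le> H (Suc i) - H i"
    and left: "0 < i \<Longrightarrow> H i - H (i - 1) \<le> l"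
  shows "inf_conv m H l i = H i"
proof (rule antisym)
  show "inf_conv m H l i \<le> H i"
    using inf_conv_le[OF \<open>i < m\<close>, of H l i] by simp
  obtain j where j: "j < m" "inf_conv m H l i = H j + l * \<bar>real i - real j\<bar>"
    using inf_conv_attained[of m H l i] \<open>i < m\<close> by auto
  consider "i < j" | "j = i" | "j < i"
    by linarith
  then show "H i \<le> inf_conv m H l i"
  proof cases
    case 1
    have "(real j - real i) * (-l) \<le> (real j - real i) * (H (Suc i) - H i)"
      using right 1 j(1) by (intro mult_left_mono) auto
    also have "\<dots> \<le> H j - H i"
      by (rule discrete_convex_diff_ge[OF H 1 j(1)])
    finally show ?thesis
      using j 1 by (simp add: algebra_simps)
  next
    case 2
    then show ?thesis
      using j by simp
  next
    case 3
    then obtain i' where i': "i = Suc i'"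
      by (cases i) auto
    have "H (Suc i') - H j \<le> (real (Suc i') - real j) * (H (Suc i') - H i')"
      using 3 i' \<open>i < m\<close> by (intro discrete_convex_diff_le[OF H]) auto
    also have "\<dots> \<le> (real (Suc i') - real j) * l"
      using left 3 i' by (intro mult_left_mono) auto
    finally show ?thesis
      using j 3 i' by (simp add: algebra_simps)
  qed
qed

lemma inf_conv_steep_ascent:
  assumes H: "discrete_convex m H" and i: "Suc i < m" and "0 \<le> l" "l \<le> H (Suc i) - H i"
  shows "inf_conv m H l i + l \<le> inf_conv m H l (Suc i)"
proof -
  obtain j where j: "j < m" "inf_conv m H l (Suc i) = H j + l * \<bar>real (Suc i) - real j\<bar>"
    using inf_conv_attained[of m H l "Suc i"] i by auto
  show ?thesis
  proof (cases "j \<le> i")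
    case True
    then have "\<bar>real (Suc i) - real j\<bar> = \<bar>real i - real j\<bar> + 1"
      by simp
    then show ?thesis
      using j inf_conv_le[OF j(1), of H l i] by (simp add: algebra_simps)
  next
    case False
    have "(real j - real i) * l \<le> (real j - real i) * (H (Suc i) - H i)"
      using assms False by (intro mult_left_mono) auto
    also have "\<dots> \<le> H j - H i"
      using False j(1) by (intro discrete_convex_diff_ge[OF H]) auto
    finally have "(real j - real i) * l \<le> H j - H i" .
    moreover have "0 \<le> l * (real j - real i - 1)"
      using assms False by simp
    ultimately show ?thesis
      using j False inf_conv_le[of i m H l i] i by (simp add: algebra_simps)
  qed
qed

lemma inf_conv_steep_descent:
  assumes H: "discrete_convex m H" and i: "Suc i < m" and "0 \<le> l" "H (Suc i) - H i \<le> -l"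
  shows "inf_conv m H l (Suc i) + l \<le> inf_conv m H l i"
proof -
  obtain j where j: "j < m" "inf_conv m H l i = H j + l * \<bar>real i - real j\<bar>"
    using inf_conv_attained[of m H l i] i by auto
  show ?thesis
  proof (cases "j \<le> i")
    case False
    then have "\<bar>real i - real j\<bar> = \<bar>real (Suc i) - real j\<bar> + 1"
      by simp
    then show ?thesis
      using j inf_conv_le[OF j(1), of H l "Suc i"] by (simp add: algebra_simps)
  next
    case True
    have "H (Suc i) - H j \<le> (real (Suc i) - real j) * (H (Suc i) - H i)"
      using True i by (intro discrete_convex_diff_le[OF H]) auto
    also have "\<dots> \<le> (real (Suc i) - real j) * (-l)"
      using assms True by (intro mult_left_mono) auto
    finally have "H (Suc i) - H j \<le> (real (Suc i) - real j) * (-l)" .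
    moreover have "0 \<le> l * (real i - real j)"
      using assms True by simp
    ultimately show ?thesis
      using j True inf_conv_le[OF i, of H l "Suc i"] by (simp add: algebra_simps)
  qed
qed

lemma inf_conv_slope:
  assumes H: "discrete_convex m H" and i: "Suc i < m" and l: "0 \<le> l"
  shows "inf_conv m H l (Suc i) - inf_conv m H l i = clip l (H (Suc i) - H i)"
proof -
  have lip: "\<bar>inf_conv m H l (Suc i) - inf_conv m H l i\<bar> \<le> l"
    using inf_conv_lipschitz[of m l H i "Suc i"] inf_conv_lipschitz[of m l H "Suc i" i] i l
    by (auto simp: abs_le_iff)
  consider "l \<le> H (Suc i) - H i" | "H (Suc i) - H i \<le> -l" | "\<bar>H (Suc i) - H i\<bar> \<le> l"
    by linarith
  then show ?thesis
  proof cases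
    case 1
    then show ?thesis
      using inf_conv_steep_ascent[OF H i l 1] lip by (auto simp: clip_def)
  next
    case 2
    then show ?thesis
      using inf_conv_steep_descent[OF H i l 2] lip by (auto simp: clip_def)
  next
    case 3
    have "inf_conv m H l i = H i"
    proof (rule inf_conv_eq[OF H _ l])
      show "-l \<le> H (Suc i) - H i"
        using 3 by simp
      show "H i - H (i - 1) \<le> l" if "0 < i"
        using discrete_convex_slope_mono[OF H, of "i - 1" i] 3 i that by simp
    qed (use i in simp)
    moreover have "inf_conv m H l (Suc i) = H (Suc i)"
    proof (rule inf_conv_eq[OF H i l])
      show "-l \<le> H (Suc (Suc i)) - H (Suc i)" if "Suc (Suc i) < m"
        using discrete_convex_slope_mono[OF H, of i "Suc i"] 3 that by simp
    qed (use 3 in simp)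
    ultimately show ?thesis
      using 3 by (simp add: clip_def abs_le_iff)
  qed
qed

lemma discrete_convex_inf_conv:
  assumes "discrete_convex m H" "0 \<le> l"
  shows "discrete_convex m (inf_conv m H l)"
  unfolding discrete_convex_def
proof (intro allI impI)
  fix k
  assume k: "k + 2 < m"
  have "clip l (H (Suc k) - H k) \<le> clip l (H (Suc (Suc k)) - H (Suc k))"
    using assms(1) k by (intro clip_mono) (simp add: discrete_convex_def)
  then show "inf_conv m H l (Suc k) - inf_conv m H l k
      \<le> inf_conv m H l (Suc (Suc k)) - inf_conv m H l (Suc k)"
    using k by (simp add: inf_conv_slope[OF assms(1) _ assms(2)])
qed

section \<open>Total variation and step functions\<close>

lemma sum_abs_increments_le_endpoints:
  fixes D :: "nat \<Rightarrow> real"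
  assumes "1 \<le> m" and nonneg: "\<And>i. i < m \<Longrightarrow> 0 \<le> D i"
    and sign_change: "\<And>k j. k \<le> j \<Longrightarrow> Suc j < m \<Longrightarrow> D k < D (Suc k) \<Longrightarrow> D j \<le> D (Suc j)"
  shows "(\<Sum>k<m-1. \<bar>D (Suc k) - D k\<bar>) \<le> D 0 + D (m - 1)"
proof -
  define K where "K = (LEAST k. m - 1 \<le> k \<or> D k < D (Suc k))"
  have K: "m - 1 \<le> K \<or> D K < D (Suc K)"
    unfolding K_def by (rule LeastI[of _ "m - 1"]) simp
  have "K \<le> m - 1"
    unfolding K_def by (rule Least_le) simp
  have down: "D (Suc k) \<le> D k" if "k < K" for k
    using not_less_Least[OF that[unfolded K_def]] by simp
  have up: "D k \<le> D (Suc k)" if "K \<le> k" "k < m - 1" for k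
    using K sign_change that by auto
  have split: "{..<m - 1} = {..<K} \<union> {K..<m - 1}"
    using \<open>K \<le> m - 1\<close> by auto
  have "(\<Sum>k<m-1. \<bar>D (Suc k) - D k\<bar>)
      = (\<Sum>k<K. \<bar>D (Suc k) - D k\<bar>) + (\<Sum>k=K..<m-1. \<bar>D (Suc k) - D k\<bar>)"
    unfolding split by (rule sum.union_disjoint) auto
  also have "(\<Sum>k<K. \<bar>D (Suc k) - D k\<bar>) = (\<Sum>k<K. D k - D (Suc k))"
    by (rule sum.cong) (use down in auto)
  also have "\<dots> = D 0 - D K"
    by (simp add: sum_lessThan_telescope')
  also have "(\<Sum>k=K..<m-1. \<bar>D (Suc k) - D k\<bar>) = (\<Sum>k=K..<m-1. D (Suc k) - D k)"
    by (rule sum.cong) (use up in auto)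
  also have "\<dots> = D (m - 1) - D K"
    using \<open>K \<le> m - 1\<close> by (simp add: sum_Suc_diff')
  finally show ?thesis
    using nonneg[of K] \<open>K \<le> m - 1\<close> \<open>1 \<le> m\<close> by simp
qed

lemma abs_diff_eq_sum_abs_indicator_diff:
  assumes "i \<le> n" "j \<le> n"
  shows "\<bar>real i - real j\<bar> = (\<Sum>k<n. \<bar>(if k < i then 1 else 0) - (if k < j then 1 else 0 :: real)\<bar>)"
proof -
  have count: "(\<Sum>k<n. if k < p then 1 else 0 :: real) = real (min p n)" for p
    by (induction n) (auto simp: min_def)
  have "(\<Sum>k<n. \<bar>(if k < i then 1 else 0) - (if k < j then 1 else 0 :: real)\<bar>)
      = (\<Sum>k<n. (if k < max i j then 1 else 0) - (if k < min i j then 1 else 0 :: real))"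
    by (rule sum.cong) auto
  also have "\<dots> = real (min (max i j) n) - real (min (min i j) n)"
    by (simp only: sum_subtractf count)
  finally show ?thesis
    using assms by (simp add: max_def min_def)
qed

lemma has_integral_indicator_lt:
  "((\<lambda>r::real. if r < a then 1 else 0 :: real) has_integral (clip 1 a + 1)) {-1<..<1}"
proof -
  define b where "b = clip 1 a"
  have b: "-1 \<le> b" "b \<le> 1"
    unfolding b_def clip_def by auto
  have "((\<lambda>r::real. if r < a then 1 else 0 :: real) has_integral (b + 1)) {-1..b}"
  proof (rule has_integral_spike_finite[of "{b}"])
    show "((\<lambda>r. 1) has_integral b + 1) {-1..b}"
      using has_integral_const_real[of "1::real" "-1" b] b by simp
  qed (auto simp: b_def clip_def)
  moreover have "((\<lambda>r::real. if r < a then 1 else 0 :: real) has_integral 0) {b..1}"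
    by (rule has_integral_spike_finite[of "{b}" _ _ "\<lambda>_. 0"]) (auto simp: b_def clip_def)
  ultimately have "((\<lambda>r::real. if r < a then 1 else 0 :: real) has_integral (b + 1)) {-1..1}"
    using has_integral_combine[of "-1" b 1] b by fastforce
  then show ?thesis
    unfolding b_def using has_integral_Icc_iff_Ioo by blast
qed

lemma has_integral_abs_indicator_diff:
  "((\<lambda>r::real. \<bar>(if r < p then 1 else 0) - (if r < q then 1 else 0 :: real)\<bar>)
     has_integral \<bar>clip 1 p - clip 1 q\<bar>) {-1<..<1}"
proof -
  have "(\<lambda>r::real. \<bar>(if r < p then 1 else 0) - (if r < q then 1 else 0 :: real)\<bar>)
      = (\<lambda>r. (if r < max p q then 1 else 0) - (if r < min p q then 1 else 0))"
    by (auto simp: max_def min_def)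
  moreover have "clip 1 (max p q) + 1 - (clip 1 (min p q) + 1) = \<bar>clip 1 p - clip 1 q\<bar>"
    using clip_mono[of p q 1] clip_mono[of q p 1] by (auto simp: max_def min_def)
  ultimately show ?thesis
    using has_integral_diff[OF has_integral_indicator_lt has_integral_indicator_lt] by metis
qed

section \<open>The algorithm DRBG\<close>

lemma is_norm_real_eq: "is_norm nm \<Longrightarrow> nm x = \<bar>x\<bar> * nm 1"
  unfolding is_norm_def by (metis mult.right_neutral)

lemma is_norm_one_pos: "is_norm nm \<Longrightarrow> 0 < nm 1"
  unfolding is_norm_def by (metis less_eq_real_def one_neq_zero)

locale drbg =
  fixes m :: nat and \<delta> \<theta> :: real and nm :: "real \<Rightarrow> real"
    and c :: "nat \<Rightarrow> real \<Rightarrow> real" and xs :: "nat \<Rightarrow> real \<Rightarrow> real"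
  assumes m_pos: "m \<ge> 1" and delta_pos: "\<delta> > 0"
    and norm: "is_norm nm" and theta: "\<theta> \<ge> 1"
    and cost_nonneg: "\<forall>s. \<forall>y \<in> states m \<delta>. c s y \<ge> 0"
    and cost_convex: "\<forall>s. \<exists>f. convex_on UNIV f \<and> (\<forall>y \<in> states m \<delta>. c s y = f y)"
    and start: "\<forall>r. xs 0 r = 0"
    and alg: "\<forall>s r. s \<ge> 1 \<and> -1 < r \<and> r < 1 \<longrightarrow>
               xs s r \<in> states m \<delta> \<and>
               (\<forall>y \<in> states m \<delta>.
                  work (states m \<delta>) (\<lambda>x. \<theta> * nm x) c (s - 1) (xs s r) + r * (\<theta> * nm (xs s r))
                  \<le> work (states m \<delta>) (\<lambda>x. \<theta> * nm x) c (s - 1) y + r * (\<theta> * nm y))"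
begin

abbreviation w :: "nat \<Rightarrow> real \<Rightarrow> real" where
  "w \<equiv> work (states m \<delta>) (\<lambda>x. \<theta> * nm x) c"

definition ell :: real where
  "ell = \<theta> * nm 1 * \<delta>"

definition W :: "nat \<Rightarrow> nat \<Rightarrow> real" where
  "W s i = w s (real i * \<delta>)"

definition cost :: "nat \<Rightarrow> nat \<Rightarrow> real" where
  "cost s i = c s (real i * \<delta>)"

definition slope :: "nat \<Rightarrow> nat \<Rightarrow> real" where
  "slope s k = W s (Suc k) - W s k"

text \<open>With parameter \<open>r\<close>, step \<open>s + 1\<close> ends to the right of grid point \<open>k\<close> iff \<open>r < threshold s k\<close>.\<close>

definition threshold :: "nat \<Rightarrow> nat \<Rightarrow> real" where
  "threshold s k = - slope s k / ell"

lemma ell_pos: "0 < ell"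
  using theta is_norm_one_pos[OF norm] delta_pos by (simp add: ell_def)

lemma grid_in_states: "k < m \<Longrightarrow> real k * \<delta> \<in> states m \<delta>"
  unfolding states_def by blast

lemma states_eq_image: "states m \<delta> = (\<lambda>k. real k * \<delta>) ` {..<m}"
  unfolding states_def by auto

lemma grid_movement_cost: "\<theta> * nm (real i * \<delta> - real j * \<delta>) = ell * \<bar>real i - real j\<bar>"
proof -
  have "real i * \<delta> - real j * \<delta> = (real i - real j) * \<delta>"
    by (simp add: algebra_simps)
  then show ?thesis
    using delta_pos is_norm_real_eq[OF norm, of "(real i - real j) * \<delta>"] by (simp add: ell_def abs_mult)
qed

lemma W_0: "W 0 i = ell * real i"
  using grid_movement_cost[of i 0] by (simp add: W_def)

lemma W_Suc: "W (Suc s) = inf_conv m (\<lambda>j. W s j + cost (Suc s) j) ell"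
proof
  fix i
  have "W (Suc s) i = Min ((\<lambda>y. w s y + c (Suc s) y + \<theta> * nm (real i * \<delta> - y))
      ` (\<lambda>k. real k * \<delta>) ` {..<m})"
    by (simp add: W_def states_eq_image)
  also have "\<dots> = inf_conv m (\<lambda>j. W s j + cost (Suc s) j) ell i"
    unfolding inf_conv_def image_image
    by (rule arg_cong[where f = Min], rule image_cong) (auto simp: W_def cost_def grid_movement_cost)
  finally show "W (Suc s) i = inf_conv m (\<lambda>j. W s j + cost (Suc s) j) ell i" .
qed

lemma cost_discrete_convex: "discrete_convex m (cost s)"
proof -
  obtain f where f: "convex_on UNIV f" "\<forall>y \<in> states m \<delta>. c s y = f y"
    using cost_convex by blast
  have "discrete_convex m (\<lambda>k. f (real k * \<delta>))"
    by (rule convex_on_discrete_convex[OF f(1)])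
  then show ?thesis
    using f(2) grid_in_states by (subst discrete_convex_cong[of m _ "\<lambda>k. f (real k * \<delta>)"]) (auto simp: cost_def)
qed

lemma cost_nonneg_grid: "k < m \<Longrightarrow> 0 \<le> cost s k"
  using cost_nonneg grid_in_states by (simp add: cost_def)

lemma W_discrete_convex: "discrete_convex m (W s)"
proof (induction s)
  case 0
  then show ?case
    using discrete_convex_linear[of m ell] by (simp add: W_0)
next
  case (Suc s)
  then show ?case
    unfolding W_Suc using ell_pos
    by (intro discrete_convex_inf_conv discrete_convex_add cost_discrete_convex) auto
qed

lemma slope_Suc:
  assumes k: "Suc k < m"
  shows "slope (Suc s) k = clip ell (slope s k + (cost (Suc s) (Suc k) - cost (Suc s) k))"
proof -
  have "discrete_convex m (\<lambda>j. W s j + cost (Suc s) j)"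
    by (intro discrete_convex_add W_discrete_convex cost_discrete_convex)
  from inf_conv_slope[OF this k] ell_pos show ?thesis
    by (simp add: slope_def W_Suc algebra_simps)
qed

lemma slope_bounded:
  assumes "Suc k < m"
  shows "\<bar>slope s k\<bar> \<le> ell"
proof (cases s)
  case 0
  then show ?thesis
    using ell_pos by (simp add: slope_def W_0 algebra_simps)
next
  case (Suc s')
  then show ?thesis
    using assms ell_pos by (simp add: slope_Suc clip_def abs_le_iff)
qed

lemma W_mono:
  assumes i: "i < m"
  shows "W s i \<le> W (Suc s) i"
proof -
  obtain j where j: "j < m" "W (Suc s) i = W s j + cost (Suc s) j + ell * \<bar>real i - real j\<bar>"
    using inf_conv_attained[of m "\<lambda>j. W s j + cost (Suc s) j" ell i] i by (auto simp: W_Suc)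
  have "\<bar>W s j - W s i\<bar> \<le> \<bar>real j - real i\<bar> * ell"
    using bounded_slopes_lipschitz[of m "W s" ell, OF _ i j(1)] slope_bounded by (simp add: slope_def)
  then show ?thesis
    using j cost_nonneg_grid[OF j(1), of "Suc s"] by (simp add: abs_minus_commute mult.commute abs_le_iff)
qed

text \<open>Each slope moves in the direction of the corresponding slope of the cost, and those are
  monotone in \<open>k\<close>; hence the increments of \<open>W (Suc s) - W s\<close> change sign at most once.\<close>

lemma slope_variation_le:
  "(\<Sum>k<m-1. \<bar>slope (Suc s) k - slope s k\<bar>) \<le> (W (Suc s) 0 - W s 0) + (W (Suc s) (m - 1) - W s (m - 1))"
proof -
  define D where "D i = W (Suc s) i - W s i" for i
  define g where "g k = cost (Suc s) (Suc k) - cost (Suc s) k" for k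
  have dD: "D (Suc k) - D k = slope (Suc s) k - slope s k" for k
    by (simp add: D_def slope_def)
  have "(\<Sum>k<m-1. \<bar>D (Suc k) - D k\<bar>) \<le> D 0 + D (m - 1)"
  proof (rule sum_abs_increments_le_endpoints[OF m_pos])
    show "0 \<le> D i" if "i < m" for i
      using W_mono[OF that] by (simp add: D_def)
    fix k j
    assume kj: "k \<le> j" "Suc j < m" and "D k < D (Suc k)"
    then have "slope s k < clip ell (slope s k + g k)"
      using dD[of k] slope_Suc[of k s] by (simp add: g_def)
    then have "0 < g k"
      using kj slope_bounded[of k s] by (intro clip_add_gt_imp_pos) auto
    also have "g k \<le> g j"
      unfolding g_def using kj by (intro discrete_convex_slope_mono[OF cost_discrete_convex])
    finally have "slope s j \<le> slope (Suc s) j"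
      using slope_Suc[OF kj(2), of s] slope_bounded[OF kj(2), of s] by (simp add: clip_add_ge g_def)
    then show "D j \<le> D (Suc j)"
      using dD[of j] by simp
  qed
  moreover have "(\<Sum>k<m-1. \<bar>slope (Suc s) k - slope s k\<bar>) = (\<Sum>k<m-1. \<bar>D (Suc k) - D k\<bar>)"
    by (simp only: dD)
  ultimately show ?thesis
    by (simp add: D_def)
qed


lemma xs_on_grid:
  assumes "1 \<le> s" "-1 < r" "r < 1"
  obtains i where "i < m" "xs s r = real i * \<delta>"
  using alg assms unfolding states_def by blast

lemma xs_argmin:
  assumes "-1 < r" "r < 1" "xs (Suc s) r = real i * \<delta>" "j < m"
  shows "W s i + r * (ell * real i) \<le> W s j + r * (ell * real j)"
proof -
  have "\<forall>y \<in> states m \<delta>. w s (xs (Suc s) r) + r * (\<theta> * nm (xs (Suc s) r))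
      \<le> w s y + r * (\<theta> * nm y)"
    using alg[rule_format, of "Suc s" r] assms(1,2) by simp
  then have "w s (xs (Suc s) r) + r * (\<theta> * nm (xs (Suc s) r))
      \<le> w s (real j * \<delta>) + r * (\<theta> * nm (real j * \<delta>))"
    using grid_in_states[OF assms(4)] by blast
  then show ?thesis
    using assms(3) grid_movement_cost[of _ 0] by (simp add: W_def)
qed

lemma xs_first_step:
  assumes "-1 < r" "r < 1"
  shows "xs 1 r = 0"
proof -
  obtain i where i: "i < m" "xs 1 r = real i * \<delta>"
    using xs_on_grid[of 1 r] assms by auto
  have "W 0 i + r * (ell * real i) \<le> W 0 0 + r * (ell * real 0)"
    using xs_argmin[of r 0 i 0] assms i m_pos by simp
  then have "(1 + r) * (ell * real i) \<le> 0"
    by (simp add: W_0 algebra_simps)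
  then have "i = 0"
    using assms ell_pos by (simp add: mult_le_0_iff)
  then show ?thesis
    using i by simp
qed

lemma xs_right_of_iff:
  assumes r: "-1 < r" "r < 1" "r \<noteq> threshold s k" and k: "Suc k < m"
  shows "real k * \<delta> < xs (Suc s) r \<longleftrightarrow> r < threshold s k"
proof -
  obtain i where i: "i < m" "xs (Suc s) r = real i * \<delta>"
    using xs_on_grid[of "Suc s" r] r by auto
  define G where "G j = W s j + (r * ell) * real j" for j
  have G: "discrete_convex m G"
    unfolding G_def by (intro discrete_convex_add W_discrete_convex discrete_convex_linear)
  have argmin: "\<forall>j<m. G i \<le> G j"
    using xs_argmin[OF r(1,2) i(2)] by (simp add: G_def mult.assoc)
  have "G (Suc k) - G k = slope s k + r * ell"
    by (simp add: G_def slope_def algebra_simps)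
  moreover have "r < threshold s k \<longleftrightarrow> slope s k + r * ell < 0"
    using ell_pos by (auto simp: threshold_def field_simps)
  moreover have "slope s k + r * ell \<noteq> 0"
    using r(3) ell_pos by (auto simp: threshold_def field_simps)
  ultimately have "k < i \<longleftrightarrow> r < threshold s k"
    using discrete_convex_argmin_gt[OF G argmin k] discrete_convex_argmin_le[OF G i(1) argmin k]
    by (cases "slope s k + r * ell < 0") auto
  then show ?thesis
    using i delta_pos by simp
qed

definition step_cost :: "nat \<Rightarrow> real \<Rightarrow> real" where
  "step_cost s r = nm 1 * \<delta> *
     (\<Sum>k<m-1. \<bar>(if r < threshold (Suc s) k then 1 else 0) - (if r < threshold s k then 1 else 0)\<bar>)"

text \<open>The move from \<open>x^(s+1)\<close> to \<open>x^(s+2)\<close> crosses edge \<open>[k, k+1]\<close> of the grid iff \<open>r\<close> lies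
  between \<open>threshold s k\<close> and \<open>threshold (Suc s) k\<close>.\<close>

lemma movement_eq_step_cost:
  assumes r: "-1 < r" "r < 1"
    and generic: "\<And>k. Suc k < m \<Longrightarrow> r \<noteq> threshold s k \<and> r \<noteq> threshold (Suc s) k"
  shows "nm (xs (Suc (Suc s)) r - xs (Suc s) r) = step_cost s r"
proof -
  obtain i where i: "i < m" "xs (Suc (Suc s)) r = real i * \<delta>"
    using xs_on_grid[of "Suc (Suc s)" r] r by auto
  obtain j where j: "j < m" "xs (Suc s) r = real j * \<delta>"
    using xs_on_grid[of "Suc s" r] r by auto
  have "nm (xs (Suc (Suc s)) r - xs (Suc s) r) = nm 1 * \<delta> * \<bar>real i - real j\<bar>"
    using grid_movement_cost[of i j] theta i j by (simp add: ell_def)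
  also have "\<bar>real i - real j\<bar>
      = (\<Sum>k<m-1. \<bar>(if k < i then 1 else 0) - (if k < j then 1 else 0 :: real)\<bar>)"
    using i j by (intro abs_diff_eq_sum_abs_indicator_diff) auto
  also have "\<dots> = (\<Sum>k<m-1. \<bar>(if r < threshold (Suc s) k then 1 else 0)
                             - (if r < threshold s k then 1 else 0)\<bar>)"
  proof (rule sum.cong)
    fix k
    assume "k \<in> {..<m-1}"
    then have k: "Suc k < m"
      by auto
    have "k < i \<longleftrightarrow> r < threshold (Suc s) k" "k < j \<longleftrightarrow> r < threshold s k"
      using xs_right_of_iff[OF r _ k, of "Suc s"] xs_right_of_iff[OF r _ k, of s]
        generic[OF k] i j delta_pos by auto
    then show "\<bar>(if k < i then 1 else 0) - (if k < j then 1 else 0 :: real)\<bar>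
        = \<bar>(if r < threshold (Suc s) k then 1 else 0) - (if r < threshold s k then 1 else 0)\<bar>"
      by simp
  qed simp
  finally show ?thesis
    by (simp add: step_cost_def)
qed

definition thresholds :: "nat \<Rightarrow> real set" where
  "thresholds t = (\<lambda>(s, k). threshold s k) ` ({..<t} \<times> {..<m-1})"

lemma finite_thresholds: "finite (thresholds t)"
  by (simp add: thresholds_def)

lemma switching_cost_eq_sum_step_cost:
  assumes "-1 < r" "r < 1" "r \<notin> thresholds t"
  shows "switching_cost nm xs t r = (\<Sum>s<t-1. step_cost s r)"
  using assms(3)
proof (induction t)
  case 0
  then show ?case
    by (simp add: switching_cost_def)
next
  case (Suc t)
  have "thresholds t \<subseteq> thresholds (Suc t)"
    unfolding thresholds_def by auto
  then have IH: "switching_cost nm xs t r = (\<Sum>s<t-1. step_cost s r)"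
    using Suc by auto
  have SC: "switching_cost nm xs (Suc t) r = switching_cost nm xs t r + nm (xs (Suc t) r - xs t r)"
    by (simp add: switching_cost_def)
  show ?case
  proof (cases t)
    case 0
    then show ?thesis
      using SC IH xs_first_step[OF assms(1,2)] start is_norm_real_eq[OF norm, of 0] by simp
  next
    case (Suc s)
    have "r \<noteq> threshold s k \<and> r \<noteq> threshold (Suc s) k" if "Suc k < m" for k
      using Suc.prems \<open>t = Suc s\<close> that unfolding thresholds_def by force
    then have "nm (xs (Suc t) r - xs t r) = step_cost s r"
      using movement_eq_step_cost[OF assms(1,2)] Suc by simp
    then show ?thesis
      using SC IH Suc by simp
  qed
qed

lemma has_integral_step_cost:
  "(step_cost s has_integral
     nm 1 * \<delta> * (\<Sum>k<m-1. \<bar>clip 1 (threshold (Suc s) k) - clip 1 (threshold s k)\<bar>)) {-1<..<1}"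
  unfolding step_cost_def[abs_def]
  by (intro has_integral_mult_right has_integral_sum has_integral_abs_indicator_diff) simp

lemma integral_step_cost_le:
  "integral {-1<..<1} (step_cost s)
     \<le> ((W (Suc s) 0 - W s 0) + (W (Suc s) (m - 1) - W s (m - 1))) / \<theta>"
proof -
  have "integral {-1<..<1} (step_cost s)
      = nm 1 * \<delta> * (\<Sum>k<m-1. \<bar>clip 1 (threshold (Suc s) k) - clip 1 (threshold s k)\<bar>)"
    using has_integral_step_cost by (rule integral_unique)
  also have "\<dots> \<le> nm 1 * \<delta> * (\<Sum>k<m-1. \<bar>threshold (Suc s) k - threshold s k\<bar>)"
    using is_norm_one_pos[OF norm] delta_pos
    by (intro mult_left_mono sum_mono clip_diff_le) auto
  also have "\<dots> = (\<Sum>k<m-1. \<bar>slope (Suc s) k - slope s k\<bar>) / \<theta>"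
  proof -
    have "nm 1 * \<delta> * \<bar>threshold (Suc s) k - threshold s k\<bar> = \<bar>slope (Suc s) k - slope s k\<bar> / \<theta>" for k
    proof -
      have "threshold (Suc s) k - threshold s k = (slope s k - slope (Suc s) k) / ell"
        by (simp add: threshold_def diff_divide_distrib)
      then show ?thesis
        using theta delta_pos is_norm_one_pos[OF norm]
        by (simp add: abs_divide abs_minus_commute ell_def)
    qed
    then show ?thesis
      by (simp add: sum_distrib_left sum_divide_distrib)
  qed
  also have "\<dots> \<le> ((W (Suc s) 0 - W s 0) + (W (Suc s) (m - 1) - W s (m - 1))) / \<theta>"
    using theta by (intro divide_right_mono slope_variation_le) auto
  finally show ?thesis .
qed


lemma switching_cost_has_integral:
  "(switching_cost nm xs t has_integral (\<Sum>s<t-1. integral {-1<..<1} (step_cost s))) {-1<..<1}"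
proof (rule has_integral_spike_finite[OF finite_thresholds[of t]])
  show "((\<lambda>r. \<Sum>s<t-1. step_cost s r) has_integral (\<Sum>s<t-1. integral {-1<..<1} (step_cost s)))
      {-1<..<1}"
    using has_integral_integrable[OF has_integral_step_cost]
    by (intro has_integral_sum integrable_integral) auto
qed (simp add: switching_cost_eq_sum_step_cost)

lemma integral_switching_cost_le:
  "integral {-1<..<1} (switching_cost nm xs t) \<le> (W t 0 + W t (m - 1) - ell * real (m - 1)) / \<theta>"
proof -
  have "integral {-1<..<1} (switching_cost nm xs t) = (\<Sum>s<t-1. integral {-1<..<1} (step_cost s))"
    using switching_cost_has_integral by (rule integral_unique)
  also have "\<dots> \<le> (\<Sum>s<t-1. ((W (Suc s) 0 - W s 0) + (W (Suc s) (m - 1) - W s (m - 1))) / \<theta>)"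
    by (intro sum_mono integral_step_cost_le)
  also have "\<dots> = ((W (t - 1) 0 - W 0 0) + (W (t - 1) (m - 1) - W 0 (m - 1))) / \<theta>"
    by (simp only: sum_divide_distrib[symmetric] sum.distrib
        sum_lessThan_telescope[of "\<lambda>s. W s 0"] sum_lessThan_telescope[of "\<lambda>s. W s (m - 1)"])
  also have "\<dots> \<le> (W t 0 + W t (m - 1) - ell * real (m - 1)) / \<theta>"
  proof -
    have "W (t - 1) i \<le> W t i" if "i < m" for i
      using W_mono[OF that, of "t - 1"] by (cases t) auto
    then show ?thesis
      using m_pos theta by (intro divide_right_mono) (auto simp: W_0 add_mono)
  qed
  finally show ?thesis .
qed

end

theorem lemma10:
  fixes m :: nat and \<delta> \<theta> :: real and nm :: "real \<Rightarrow> real"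
    and c :: "nat \<Rightarrow> real \<Rightarrow> real" and xs :: "nat \<Rightarrow> real \<Rightarrow> real" and t :: nat
  assumes m_pos: "m \<ge> 1" and delta_pos: "\<delta> > 0"
    and norm: "is_norm nm" and theta: "\<theta> \<ge> 1"
    and cost_nonneg: "\<forall>s. \<forall>y \<in> states m \<delta>. c s y \<ge> 0"
    and cost_convex: "\<forall>s. \<exists>f. convex_on UNIV f \<and> (\<forall>y \<in> states m \<delta>. c s y = f y)"
    and start: "\<forall>r. xs 0 r = 0"
    and alg: "\<forall>s r. s \<ge> 1 \<and> -1 < r \<and> r < 1 \<longrightarrow>
               xs s r \<in> states m \<delta> \<and>
               (\<forall>y \<in> states m \<delta>.
                  work (states m \<delta>) (\<lambda>x. \<theta> * nm x) c (s - 1) (xs s r) + r * (\<theta> * nm (xs s r))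
                  \<le> work (states m \<delta>) (\<lambda>x. \<theta> * nm x) c (s - 1) y + r * (\<theta> * nm y))"
  shows "switching_cost nm xs t integrable_on {-1<..<1} \<and>
         integral {-1<..<1} (switching_cost nm xs t) / 2
           \<le> (work (states m \<delta>) (\<lambda>x. \<theta> * nm x) c t 0
               + work (states m \<delta>) (\<lambda>x. \<theta> * nm x) c t (real (m - 1) * \<delta>)) / (2 * \<theta>)
             - nm (real (m - 1) * \<delta> - 0) / 2"
proof -
  interpret drbg m \<delta> \<theta> nm c xs
    by (fact drbg.intro[OF assms])
  have "integral {-1<..<1} (switching_cost nm xs t) / 2
      \<le> (W t 0 + W t (m - 1) - ell * real (m - 1)) / \<theta> / 2"
    by (rule divide_right_mono[OF integral_switching_cost_le]) simp
  also have "\<dots> = (W t 0 + W t (m - 1)) / (2 * \<theta>) - nm (real (m - 1) * \<delta> - 0) / 2"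
    using theta delta_pos is_norm_real_eq[OF norm, of "real (m - 1) * \<delta>"]
    by (simp add: ell_def diff_divide_distrib mult_ac)
  finally have "integral {-1<..<1} (switching_cost nm xs t) / 2
      \<le> (W t 0 + W t (m - 1)) / (2 * \<theta>) - nm (real (m - 1) * \<delta> - 0) / 2" .
  then show ?thesis
    using has_integral_integrable[OF switching_cost_has_integral] by (simp add: W_def)
qed

end
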